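(* For every finite multiset $\Gamma$ of formulas and every formula $\varphi$: if the sequent $\Gamma\Rightarrow\varphi$ is provable in $\mathsf{G4iSLt}$, then $\Gamma\models\varphi$, i.e. for every Kripke model $\mathcal M$ for $\mathsf{iSL}$ and every world $w$ of $\mathcal M$, if $\mathcal M,w\Vdash\psi$ for all $\psi\in\Gamma$ then $\mathcal M,w\Vdash\varphi$.
   Context: Formulas are built by the grammar $\varphi ::= p \mid \bot \mid \varphi\land\varphi \mid \varphi\lor\varphi \mid \varphi\to\varphi \mid \Box\varphi$, with $p$ ranging over a countably infinite set $\mathbb V$ of propositional variables. For a multiset $\Gamma$, $\Box\Gamma=\{\Box\psi:\psi\in\Gamma\}$; a boxed formula is one of the form $\Box\psi$. A Kripke model for $\mathsf{iSL}$ is a tuple $(W,\leq,R,I)$ with $W$ a non-empty set, $\leq,R\subseteq W\times W$, and $I:\mathbb V\to\mathcal P(W)$, such that: $\leq$ is reflexive and transitive; $R$ is transitive and converse well-founded (no infinite chain $w_0Rw_1Rw_2R\cdots$); $(\leq\circ R)\subseteq R$ (i.e. $w\leq u$ and $uRv$ imply $wRv$); $R\subseteq\ \leq$; and for all $p$, if $w\leq v$ and $w\in I(p)$ then $v\in I(p)$. Forcing: $w\Vdash p$ iff $w\in I(p)$; $w\Vdash\bot$ never; $w\Vdash\varphi\land\psi$ iff both; $w\Vdash\varphi\lor\psi$ iff at least one; $w\Vdash\varphi\to\psi$ iff for all $v\geq w$, $v\Vdash\varphi$ implies $v\Vdash\psi$; $w\Vdash\Box\varphi$ iff for all $v$ with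 $wRv$, $v\Vdash\varphi$. A sequent is $\Gamma\Rightarrow\chi$ with $\Gamma$ a finite multiset of formulas and $\chi$ a formula. The sequent calculus $\mathsf{G4iSLt}$ has the following rules, where $p$ is a propositional variable and $\Phi$ always denotes a multiset containing no boxed formula: (⊥L) $\bot,\Gamma\Rightarrow\chi$ (no premise); (IdP) $\Gamma,p\Rightarrow p$ (no premise); (∧L) from $\Gamma,\varphi,\psi\Rightarrow\chi$ infer $\Gamma,\varphi\land\psi\Rightarrow\chi$; (∧R) from $\Gamma\Rightarrow\varphi$ and $\Gamma\Rightarrow\psi$ infer $\Gamma\Rightarrow\varphi\land\psi$; (∨L) from $\Gamma,\varphi\Rightarrow\chi$ and $\Gamma,\psi\Rightarrow\chi$ infer $\Gamma,\varphi\lor\psi\Rightarrow\chi$; (∨R$_i$), $i\in\{1,2\}$: from $\Gamma\Rightarrow\varphi_i$ infer $\Gamma\Rightarrow\varphi_1\lor\varphi_2$; (p→L) from $\Gamma,p,\varphi\Rightarrow\chi$ infer $\Gamma,p,p\to\varphi\Rightarrow\chi$; (→R) from $\Gamma,\varphi\Rightarrow\psi$ infer $\Gamma\Rightarrow\varphi\to\psi$; (□→L) from $\Phi,\Gamma,\psi,\Box\varphi\Rightarrow\varphi$ and $\Phi,\Box\Gamma,\psi\Rightarrow\chi$ infer $\Phi,\Box\Gamma,\Box\varphi\to\psi\Rightarrow\chi$; (SLtR) from $\Phi,\Gamma,\Box\varphi\Rightarrow\varphi$ infer $\Phi,\Box\Gamma\Rightarrow\Box\varphi$; (∧→L) from $\Gamma,\varphi\to(\psi\to\chi)\Rightarrow\delta$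 infer $\Gamma,(\varphi\land\psi)\to\chi\Rightarrow\delta$; (∨→L) from $\Gamma,\varphi\to\chi,\psi\to\chi\Rightarrow\delta$ infer $\Gamma,(\varphi\lor\psi)\to\chi\Rightarrow\delta$; (→→L) from $\Gamma,\psi\to\chi\Rightarrow\varphi\to\psi$ and $\Gamma,\chi\Rightarrow\delta$ infer $\Gamma,(\varphi\to\psi)\to\chi\Rightarrow\delta$. A proof of a sequent $S$ is a finite tree of sequents with root $S$ in which each interior node together with its children forms an instance of a rule (conclusion, premises) and each leaf is the conclusion of a premise-free rule; $S$ is provable if it has a proof. *)

theory Defs
  imports Main "HOL-Library.Multiset"
begin

datatype form =
    FVar nat
  | FBot
  | FAnd form form
  | FOr form form
  | FImp form form
  | FBox form

definition boxed :: "form \<Rightarrow> bool" where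
  "boxed f \<longleftrightarrow> (\<exists>g. f = FBox g)"

definition box_free :: "form multiset \<Rightarrow> bool" where
  "box_free \<Phi> \<longleftrightarrow> (\<forall>f \<in># \<Phi>. \<not> boxed f)"

abbreviation boxms :: "form multiset \<Rightarrow> form multiset" where
  "boxms \<Gamma> \<equiv> image_mset FBox \<Gamma>"

inductive G4iSLt :: "form multiset \<Rightarrow> form \<Rightarrow> bool" where
  BotL: "G4iSLt (add_mset FBot \<Gamma>) \<chi>"
| IdP: "G4iSLt (add_mset (FVar p) \<Gamma>) (FVar p)"
| AndL: "G4iSLt (\<Gamma> + {#\<phi>, \<psi>#}) \<chi> \<Longrightarrow> G4iSLt (add_mset (FAnd \<phi> \<psi>) \<Gamma>) \<chi>"
| AndR: "G4iSLt \<Gamma> \<phi> \<Longrightarrow> G4iSLt \<Gamma> \<psi> \<Longrightarrow> G4iSLt \<Gamma> (FAnd \<phi> \<psi>)"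
| OrL: "G4iSLt (add_mset \<phi> \<Gamma>) \<chi> \<Longrightarrow> G4iSLt (add_mset \<psi> \<Gamma>) \<chi>
        \<Longrightarrow> G4iSLt (add_mset (FOr \<phi> \<psi>) \<Gamma>) \<chi>"
| OrR1: "G4iSLt \<Gamma> \<phi> \<Longrightarrow> G4iSLt \<Gamma> (FOr \<phi> \<psi>)"
| OrR2: "G4iSLt \<Gamma> \<psi> \<Longrightarrow> G4iSLt \<Gamma> (FOr \<phi> \<psi>)"
| PImpL: "G4iSLt (\<Gamma> + {#FVar p, \<phi>#}) \<chi>
        \<Longrightarrow> G4iSLt (\<Gamma> + {#FVar p, FImp (FVar p) \<phi>#}) \<chi>"
| ImpR: "G4iSLt (add_mset \<phi> \<Gamma>) \<psi> \<Longrightarrow> G4iSLt \<Gamma> (FImp \<phi> \<psi>)"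
| BoxImpL: "box_free \<Phi> \<Longrightarrow>
        G4iSLt (\<Phi> + \<Gamma> + {#\<psi>, FBox \<phi>#}) \<phi> \<Longrightarrow>
        G4iSLt (\<Phi> + boxms \<Gamma> + {#\<psi>#}) \<chi> \<Longrightarrow>
        G4iSLt (\<Phi> + boxms \<Gamma> + {#FImp (FBox \<phi>) \<psi>#}) \<chi>"
| SLtR: "box_free \<Phi> \<Longrightarrow>
        G4iSLt (\<Phi> + \<Gamma> + {#FBox \<phi>#}) \<phi> \<Longrightarrow>
        G4iSLt (\<Phi> + boxms \<Gamma>) (FBox \<phi>)"
| AndImpL: "G4iSLt (add_mset (FImp \<phi> (FImp \<psi> \<chi>)) \<Gamma>) \<delta>
        \<Longrightarrow> G4iSLt (add_mset (FImp (FAnd \<phi> \<psi>) \<chi>) \<Gamma>) \<delta>"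
| OrImpL: "G4iSLt (\<Gamma> + {#FImp \<phi> \<chi>, FImp \<psi> \<chi>#}) \<delta>
        \<Longrightarrow> G4iSLt (add_mset (FImp (FOr \<phi> \<psi>) \<chi>) \<Gamma>) \<delta>"
| ImpImpL: "G4iSLt (add_mset (FImp \<psi> \<chi>) \<Gamma>) (FImp \<phi> \<psi>) \<Longrightarrow>
        G4iSLt (add_mset \<chi> \<Gamma>) \<delta> \<Longrightarrow>
        G4iSLt (add_mset (FImp (FImp \<phi> \<psi>) \<chi>) \<Gamma>) \<delta>"

definition kripke_iSL ::
  "'w set \<Rightarrow> ('w \<Rightarrow> 'w \<Rightarrow> bool) \<Rightarrow> ('w \<Rightarrow> 'w \<Rightarrow> bool) \<Rightarrow> (nat \<Rightarrow> 'w set) \<Rightarrow> bool" where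
  "kripke_iSL W le R I \<longleftrightarrow>
     W \<noteq> {} \<and>
     (\<forall>u v. le u v \<longrightarrow> u \<in> W \<and> v \<in> W) \<and>
     (\<forall>u v. R u v \<longrightarrow> u \<in> W \<and> v \<in> W) \<and>
     (\<forall>p. I p \<subseteq> W) \<and>
     (\<forall>w\<in>W. le w w) \<and>
     (\<forall>u v x. le u v \<longrightarrow> le v x \<longrightarrow> le u x) \<and>
     (\<forall>u v x. R u v \<longrightarrow> R v x \<longrightarrow> R u x) \<and>
     \<not> (\<exists>f :: nat \<Rightarrow> 'w. \<forall>n. R (f n) (f (Suc n))) \<and>
     (\<forall>w u v. le w u \<longrightarrow> R u v \<longrightarrow> R w v) \<and>
     (\<forall>u v. R u v \<longrightarrow> le u v) \<and>
     (\<forall>p w v. le w v \<longrightarrow> w \<in> I p \<longrightarrow> v \<in> I p)"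

primrec forces ::
  "('w \<Rightarrow> 'w \<Rightarrow> bool) \<Rightarrow> ('w \<Rightarrow> 'w \<Rightarrow> bool) \<Rightarrow> (nat \<Rightarrow> 'w set) \<Rightarrow> 'w \<Rightarrow> form \<Rightarrow> bool" where
  "forces le R I w (FVar p) = (w \<in> I p)"
| "forces le R I w FBot = False"
| "forces le R I w (FAnd a b) = (forces le R I w a \<and> forces le R I w b)"
| "forces le R I w (FOr a b) = (forces le R I w a \<or> forces le R I w b)"
| "forces le R I w (FImp a b) = (\<forall>v. le w v \<longrightarrow> forces le R I v a \<longrightarrow> forces le R I v b)"
| "forces le R I w (FBox a) = (\<forall>v. R w v \<longrightarrow> forces le R I v a)"

end

theory Submission
  imports Defs
begin

text \<open>Soundness is checked rule by rule for validity in a fixed model. Persistence of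
  forcing along \<open>le\<close> handles the intuitionistic rules. The modal rules rest on Loeb's
  principle, which holds because the converse of R is well-founded: if every R-successor
  forcing \<box>\<phi> also forces \<phi>, then well-founded induction along R shows that every
  R-successor forces \<phi>. Such a successor of w forces \<Gamma> when w forces \<box>\<Gamma>, and it
  forces everything w forces because R is contained in \<open>le\<close>.\<close>

locale iSL_model =
  fixes W :: "'w set" and le R :: "'w \<Rightarrow> 'w \<Rightarrow> bool" and I :: "nat \<Rightarrow> 'w set"
  assumes kripke: "kripke_iSL W le R I"
begin

abbreviation forces_at :: "'w \<Rightarrow> form \<Rightarrow> bool" (infix "\<Vdash>" 50) where
  "w \<Vdash> \<phi> \<equiv> forces le R I w \<phi>"

lemma le_refl: "w \<in> W \<Longrightarrow> le w w"
  using kripke unfolding kripke_iSL_def by (elim conjE) blast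

lemma le_trans: "le u v \<Longrightarrow> le v x \<Longrightarrow> le u x"
  using kripke unfolding kripke_iSL_def by (elim conjE) blast

lemma le_closed: "le w v \<Longrightarrow> v \<in> W"
  using kripke unfolding kripke_iSL_def by (elim conjE) blast

lemma R_trans: "R u v \<Longrightarrow> R v x \<Longrightarrow> R u x"
  using kripke unfolding kripke_iSL_def by (elim conjE) blast

lemma le_R_subsumes_R: "le w u \<Longrightarrow> R u v \<Longrightarrow> R w v"
  using kripke unfolding kripke_iSL_def by (elim conjE) blast

lemma R_imp_le: "R u v \<Longrightarrow> le u v"
  using kripke unfolding kripke_iSL_def by (elim conjE) blast

lemma valuation_mono: "le w v \<Longrightarrow> w \<in> I p \<Longrightarrow> v \<in> I p"
  using kripke unfolding kripke_iSL_def by (elim conjE) metis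

lemma no_infinite_R_chain: "\<nexists>f. \<forall>n. R (f n) (f (Suc n))"
  using kripke unfolding kripke_iSL_def by (elim conjE)

lemma wf_converse_R: "wf {(v, u). R u v}"
  using no_infinite_R_chain unfolding wf_iff_no_infinite_down_chain by simp

lemma forces_mono: "le w v \<Longrightarrow> w \<Vdash> \<phi> \<Longrightarrow> v \<Vdash> \<phi>"
proof (induction \<phi> arbitrary: w v)
  case (FVar p)
  then show ?case using valuation_mono by simp
next
  case (FImp \<phi> \<psi>)
  then show ?case using le_trans by simp
next
  case (FBox \<phi>)
  then show ?case using le_R_subsumes_R by simp
qed auto

lemma forces_mset_mono: "le w v \<Longrightarrow> \<forall>\<psi>\<in>#\<Gamma>. w \<Vdash> \<psi> \<Longrightarrow> \<forall>\<psi>\<in>#\<Gamma>. v \<Vdash> \<psi>"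
  using forces_mono by blast

lemma forces_Imp_mp: "w \<in> W \<Longrightarrow> w \<Vdash> FImp \<phi> \<psi> \<Longrightarrow> w \<Vdash> \<phi> \<Longrightarrow> w \<Vdash> \<psi>"
  using le_refl by auto

lemma forces_Imp_curry:
  assumes "w \<Vdash> FImp (FAnd \<phi> \<psi>) \<chi>"
  shows "w \<Vdash> FImp \<phi> (FImp \<psi> \<chi>)"
proof (simp only: forces.simps, intro allI impI)
  fix v u
  assume "le w v" "v \<Vdash> \<phi>" "le v u" "u \<Vdash> \<psi>"
  then have "le w u" and "u \<Vdash> FAnd \<phi> \<psi>"
    using le_trans forces_mono by auto
  with assms show "u \<Vdash> \<chi>"
    by simp
qed

lemma forces_Imp_Imp_weaken:
  assumes "w \<Vdash> FImp (FImp \<phi> \<psi>) \<chi>"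
  shows "w \<Vdash> FImp \<psi> \<chi>"
proof (simp only: forces.simps(5), intro allI impI)
  fix v
  assume "le w v" "v \<Vdash> \<psi>"
  then have "v \<Vdash> FImp \<phi> \<psi>"
    using forces_mono by auto
  with assms \<open>le w v\<close> show "v \<Vdash> \<chi>"
    by simp
qed

lemma forces_Box_Loeb:
  assumes step: "\<And>v. R w v \<Longrightarrow> v \<Vdash> FBox \<phi> \<Longrightarrow> v \<Vdash> \<phi>"
  shows "w \<Vdash> FBox \<phi>"
proof -
  have "R w v \<longrightarrow> v \<Vdash> \<phi>" for v
  proof (induction v rule: wf_induct[OF wf_converse_R])
    case (1 v)
    show ?case
    proof
      assume "R w v"
      with 1 have "v \<Vdash> FBox \<phi>"
        using R_trans by auto
      with \<open>R w v\<close> show "v \<Vdash> \<phi>"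
        by (rule step)
    qed
  qed
  then show ?thesis by simp
qed

definition sequent_valid :: "form multiset \<Rightarrow> form \<Rightarrow> bool" where
  "sequent_valid \<Gamma> \<phi> \<longleftrightarrow> (\<forall>w\<in>W. (\<forall>\<psi>\<in>#\<Gamma>. w \<Vdash> \<psi>) \<longrightarrow> w \<Vdash> \<phi>)"

lemma sequent_validI:
  "(\<And>w. w \<in> W \<Longrightarrow> \<forall>\<psi>\<in>#\<Gamma>. w \<Vdash> \<psi> \<Longrightarrow> w \<Vdash> \<phi>) \<Longrightarrow> sequent_valid \<Gamma> \<phi>"
  unfolding sequent_valid_def by blast

lemma sequent_validD:
  "sequent_valid \<Gamma> \<phi> \<Longrightarrow> w \<in> W \<Longrightarrow> \<forall>\<psi>\<in>#\<Gamma>. w \<Vdash> \<psi> \<Longrightarrow> w \<Vdash> \<phi>"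
  unfolding sequent_valid_def by blast

lemma sequent_valid_antecedent_mono:
  assumes "\<And>w. w \<Vdash> \<alpha> \<Longrightarrow> w \<Vdash> \<beta>"
    and "sequent_valid (add_mset \<beta> \<Gamma>) \<chi>"
  shows "sequent_valid (add_mset \<alpha> \<Gamma>) \<chi>"
  using assms unfolding sequent_valid_def by (auto simp del: forces.simps)

lemma sequent_valid_Imp_mp:
  assumes "sequent_valid (\<Gamma> + {#\<alpha>, \<beta>#}) \<chi>"
  shows "sequent_valid (\<Gamma> + {#\<alpha>, FImp \<alpha> \<beta>#}) \<chi>"
proof (rule sequent_validI)
  fix w
  assume "w \<in> W" and ctx: "\<forall>\<psi>\<in>#\<Gamma> + {#\<alpha>, FImp \<alpha> \<beta>#}. w \<Vdash> \<psi>"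
  then have "w \<Vdash> \<beta>"
    using forces_Imp_mp[OF \<open>w \<in> W\<close>, of \<alpha> \<beta>] by (simp del: forces.simps)
  with ctx have "\<forall>\<psi>\<in>#\<Gamma> + {#\<alpha>, \<beta>#}. w \<Vdash> \<psi>"
    by (simp del: forces.simps)
  with assms \<open>w \<in> W\<close> show "w \<Vdash> \<chi>"
    by (rule sequent_validD)
qed

lemma sequent_valid_ImpR:
  assumes "sequent_valid (add_mset \<phi> \<Gamma>) \<psi>"
  shows "sequent_valid \<Gamma> (FImp \<phi> \<psi>)"
proof (rule sequent_validI)
  fix w
  assume "w \<in> W" and ctx: "\<forall>\<chi>\<in>#\<Gamma>. w \<Vdash> \<chi>"
  show "w \<Vdash> FImp \<phi> \<psi>"
  proof (simp only: forces.simps(5), intro allI impI)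
    fix v
    assume "le w v" and "v \<Vdash> \<phi>"
    with ctx have "\<forall>\<chi>\<in>#add_mset \<phi> \<Gamma>. v \<Vdash> \<chi>"
      using forces_mset_mono by simp
    with assms le_closed[OF \<open>le w v\<close>] show "v \<Vdash> \<psi>"
      by (rule sequent_validD)
  qed
qed

lemma sequent_valid_SLtR:
  assumes "sequent_valid (\<Phi> + \<Gamma> + {#FBox \<phi>#}) \<phi>"
  shows "sequent_valid (\<Phi> + boxms \<Gamma>) (FBox \<phi>)"
proof (rule sequent_validI)
  fix w
  assume ctx: "\<forall>\<chi>\<in>#\<Phi> + boxms \<Gamma>. w \<Vdash> \<chi>"
  show "w \<Vdash> FBox \<phi>"
  proof (rule forces_Box_Loeb)
    fix v
    assume "R w v" and "v \<Vdash> FBox \<phi>"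
    from \<open>R w v\<close> have "le w v"
      by (rule R_imp_le)
    then have "\<forall>\<chi>\<in>#\<Phi>. v \<Vdash> \<chi>"
      using ctx forces_mset_mono[of w v \<Phi>] by simp
    moreover have "v \<Vdash> \<chi>" if "\<chi> \<in># \<Gamma>" for \<chi>
    proof -
      from that ctx have "w \<Vdash> FBox \<chi>"
        by (auto simp del: forces.simps)
      with \<open>R w v\<close> show ?thesis
        by simp
    qed
    ultimately have "\<forall>\<chi>\<in>#\<Phi> + \<Gamma> + {#FBox \<phi>#}. v \<Vdash> \<chi>"
      using \<open>v \<Vdash> FBox \<phi>\<close> by (auto simp del: forces.simps)
    with assms le_closed[OF \<open>le w v\<close>] show "v \<Vdash> \<phi>"
      by (rule sequent_validD)
  qed
qed

lemma sequent_valid_BoxImpL: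
  assumes left: "sequent_valid (\<Phi> + \<Gamma> + {#\<psi>, FBox \<phi>#}) \<phi>"
    and right: "sequent_valid (\<Phi> + boxms \<Gamma> + {#\<psi>#}) \<chi>"
  shows "sequent_valid (\<Phi> + boxms \<Gamma> + {#FImp (FBox \<phi>) \<psi>#}) \<chi>"
proof (rule sequent_validI)
  fix w
  assume "w \<in> W" and ctx: "\<forall>\<delta>\<in>#\<Phi> + boxms \<Gamma> + {#FImp (FBox \<phi>) \<psi>#}. w \<Vdash> \<delta>"
  \<comment> \<open>with \<open>\<box>\<phi> \<rightarrow> \<psi>\<close> moved into \<Phi>, the left premise yields an instance of (SLtR)\<close>
  have "sequent_valid (add_mset (FImp (FBox \<phi>) \<psi>) \<Phi> + \<Gamma> + {#FBox \<phi>#}) \<phi>"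
    using sequent_valid_Imp_mp[of "\<Phi> + \<Gamma>" "FBox \<phi>" \<psi> \<phi>] left
    by (simp add: add_mset_commute ac_simps)
  then have "sequent_valid (add_mset (FImp (FBox \<phi>) \<psi>) \<Phi> + boxms \<Gamma>) (FBox \<phi>)"
    by (rule sequent_valid_SLtR)
  moreover have "\<forall>\<delta>\<in>#add_mset (FImp (FBox \<phi>) \<psi>) \<Phi> + boxms \<Gamma>. w \<Vdash> \<delta>"
    using ctx by (simp del: forces.simps)
  ultimately have "w \<Vdash> FBox \<phi>"
    by (rule sequent_validD[OF _ \<open>w \<in> W\<close>])
  moreover have "w \<Vdash> FImp (FBox \<phi>) \<psi>"
    using ctx by (simp del: forces.simps)
  ultimately have "w \<Vdash> \<psi>"
    using forces_Imp_mp[OF \<open>w \<in> W\<close>] by blast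
  with ctx have "\<forall>\<delta>\<in>#\<Phi> + boxms \<Gamma> + {#\<psi>#}. w \<Vdash> \<delta>"
    by (simp del: forces.simps)
  with right \<open>w \<in> W\<close> show "w \<Vdash> \<chi>"
    by (rule sequent_validD)
qed

lemma sequent_valid_ImpImpL:
  assumes left: "sequent_valid (add_mset (FImp \<psi> \<chi>) \<Gamma>) (FImp \<phi> \<psi>)"
    and right: "sequent_valid (add_mset \<chi> \<Gamma>) \<delta>"
  shows "sequent_valid (add_mset (FImp (FImp \<phi> \<psi>) \<chi>) \<Gamma>) \<delta>"
proof (rule sequent_validI)
  fix w
  assume "w \<in> W" and ctx: "\<forall>\<gamma>\<in>#add_mset (FImp (FImp \<phi> \<psi>) \<chi>) \<Gamma>. w \<Vdash> \<gamma>"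
  then have imp: "w \<Vdash> FImp (FImp \<phi> \<psi>) \<chi>" and ctx': "\<forall>\<gamma>\<in>#\<Gamma>. w \<Vdash> \<gamma>"
    by (simp_all del: forces.simps)
  from imp have "w \<Vdash> FImp \<psi> \<chi>"
    by (rule forces_Imp_Imp_weaken)
  with ctx' have "\<forall>\<gamma>\<in>#add_mset (FImp \<psi> \<chi>) \<Gamma>. w \<Vdash> \<gamma>"
    by (simp del: forces.simps)
  with left \<open>w \<in> W\<close> have "w \<Vdash> FImp \<phi> \<psi>"
    by (rule sequent_validD)
  with imp have "w \<Vdash> \<chi>"
    using forces_Imp_mp[OF \<open>w \<in> W\<close>] by blast
  with ctx' have "\<forall>\<gamma>\<in>#add_mset \<chi> \<Gamma>. w \<Vdash> \<gamma>"
    by (simp del: forces.simps)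
  with right \<open>w \<in> W\<close> show "w \<Vdash> \<delta>"
    by (rule sequent_validD)
qed

end

theorem mainTheorem4:
  fixes \<Gamma> :: "form multiset" and \<phi> :: form
    and W :: "'w set" and le R :: "'w \<Rightarrow> 'w \<Rightarrow> bool" and I :: "nat \<Rightarrow> 'w set"
  assumes "G4iSLt \<Gamma> \<phi>"
    and "kripke_iSL W le R I"
    and "w \<in> W"
    and "\<forall>\<psi> \<in># \<Gamma>. forces le R I w \<psi>"
  shows "forces le R I w \<phi>"
proof -
  interpret iSL_model W le R I
    using assms(2) by (rule iSL_model.intro)
  have "sequent_valid \<Gamma> \<phi>"
    using assms(1)
  proof (induction rule: G4iSLt.induct)
    case (PImpL \<Gamma> p \<phi> \<chi>)
    from PImpL.IH show ?case by (rule sequent_valid_Imp_mp)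
  next
    case (ImpR \<phi> \<Gamma> \<psi>)
    from ImpR.IH show ?case by (rule sequent_valid_ImpR)
  next
    case (BoxImpL \<Phi> \<Gamma> \<psi> \<phi> \<chi>)
    from BoxImpL.IH show ?case by (rule sequent_valid_BoxImpL)
  next
    case (SLtR \<Phi> \<Gamma> \<phi>)
    from SLtR.IH show ?case by (rule sequent_valid_SLtR)
  next
    case (AndImpL \<phi> \<psi> \<chi> \<Gamma> \<delta>)
    show ?case by (rule sequent_valid_antecedent_mono[OF _ AndImpL.IH]) (rule forces_Imp_curry)
  next
    case (ImpImpL \<psi> \<chi> \<Gamma> \<phi> \<delta>)
    from ImpImpL.IH show ?case by (rule sequent_valid_ImpImpL)
  qed (auto simp: sequent_valid_def)
  then show ?thesis
    using assms(3,4) by (rule sequent_validD)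
qed

end
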